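(* Let $\theta_N=1+N^{-2/3}w_N$ with $w_N>0$, $(\log\log N)^2/w_N\to0$ and $w_N/(\log N)^2\to0$. For $1\le i\le N$ let $r_i=1+\sqrt{1-\frac{i-1}{N\theta_N^2}}$, $m_i=1-\sqrt{1-\frac{i-1}{N\theta_N^2}}$, $\gamma_i=m_i/r_i$; for $2\le i\le N$ let $\delta_i=\frac{m_i}{r_i}-\frac{m_i}{r_{i-1}}$, and for $3\le i\le N$ let \[ T_{\delta i}=\delta_i+\gamma_i\delta_{i-1}+\gamma_i\gamma_{i-1}\delta_{i-2}+\dots+\gamma_i\gamma_{i-1}\cdots\gamma_4\delta_3. \] Then, for large enough $N$, \[ \sum_{i=3}^NT_{\delta i}=\frac16\log N+O(\log\log N). \] *)

theory Defs
  imports "HOL-Analysis.Analysis" "HOL-Library.Landau_Symbols"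
begin

definition theta :: "(nat \<Rightarrow> real) \<Rightarrow> nat \<Rightarrow> real" where
  "theta w N = 1 + real N powr (-2/3) * w N"

definition rr :: "(nat \<Rightarrow> real) \<Rightarrow> nat \<Rightarrow> nat \<Rightarrow> real" where
  "rr w N i = 1 + sqrt (1 - (real i - 1) / (real N * (theta w N)^2))"

definition mm :: "(nat \<Rightarrow> real) \<Rightarrow> nat \<Rightarrow> nat \<Rightarrow> real" where
  "mm w N i = 1 - sqrt (1 - (real i - 1) / (real N * (theta w N)^2))"

definition gam :: "(nat \<Rightarrow> real) \<Rightarrow> nat \<Rightarrow> nat \<Rightarrow> real" where
  "gam w N i = mm w N i / rr w N i"

definition delta :: "(nat \<Rightarrow> real) \<Rightarrow> nat \<Rightarrow> nat \<Rightarrow> real" where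
  "delta w N i = mm w N i / rr w N i - mm w N i / rr w N (i - 1)"

definition Tdelta :: "(nat \<Rightarrow> real) \<Rightarrow> nat \<Rightarrow> nat \<Rightarrow> real" where
  "Tdelta w N i = (\<Sum>j=3..i. (\<Prod>k=j+1..i. gam w N k) * delta w N j)"

end

theory Submission
  imports Defs "HOL-Real_Asymp.Real_Asymp"
begin

text \<open>Write c = N theta_N^2 and rho_i = sqrt (1 - (i - 1) / c), so that gamma_i = (1 - rho_i) / (1 + rho_i).
Since c (rho_(i-1)^2 - rho_i^2) = 1, the increment delta_i factors as (1 - gamma_i) A_i, where
A_i is close to 1 / (4 c rho_i^2) and increases with i. Hence T_i = delta_i + gamma_i T_(i-1) is a
convex combination of T_(i-1) and A_i: the T_i stay below the A_i, and the accumulated lag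
sum (A_i - T_i) is at most A_N / (1 - gamma_N) = O(1). Comparing A_i with the increments of
-(ln rho_i^2) / 4 gives sum A_i = -(ln rho_N^2) / 4 + O(1), and rho_N^2 is comparable to
t = N^(-2/3) w_N. So the sum is (ln N) / 6 - (ln w_N) / 4 + O(1), and 0 <= ln w_N <= 2 ln ln N.\<close>

definition discounted_sum :: "(nat \<Rightarrow> real) \<Rightarrow> (nat \<Rightarrow> real) \<Rightarrow> nat \<Rightarrow> nat \<Rightarrow> real" where
  "discounted_sum g d m i = (\<Sum>j=m..i. (\<Prod>k=j+1..i. g k) * d j)"

lemma discounted_sum_start: "discounted_sum g d m m = d m"
  by (simp add: discounted_sum_def)

lemma discounted_sum_Suc:
  assumes "m \<le> Suc i"
  shows "discounted_sum g d m (Suc i) = d (Suc i) + g (Suc i) * discounted_sum g d m i"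
proof -
  have "discounted_sum g d m (Suc i) = (\<Sum>j=m..i. (\<Prod>k=j+1..Suc i. g k) * d j) + d (Suc i)"
    unfolding discounted_sum_def using assms by (simp add: sum.cl_ivl_Suc)
  also have "(\<Sum>j=m..i. (\<Prod>k=j+1..Suc i. g k) * d j) = g (Suc i) * discounted_sum g d m i"
    unfolding discounted_sum_def sum_distrib_left by (intro sum.cong) (auto simp: prod.cl_ivl_Suc)
  finally show ?thesis by simp
qed

context
  fixes g d A :: "nat \<Rightarrow> real" and m n :: nat
  assumes mn: "m \<le> n"
    and split: "\<And>i. i \<in> {m..n} \<Longrightarrow> d i = (1 - g i) * A i"
    and g_nonneg: "\<And>i. i \<in> {m..n} \<Longrightarrow> 0 \<le> g i"
    and A_nonneg: "0 \<le> A m"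
    and A_mono: "mono_on {m..n} A"
begin

lemma target_minus_discounted_sum_start: "A m - discounted_sum g d m m = g m * A m"
  using split[of m] mn by (simp add: discounted_sum_start algebra_simps)

lemma target_minus_discounted_sum_Suc:
  assumes "m \<le> i" "i < n"
  shows "A (Suc i) - discounted_sum g d m (Suc i) = g (Suc i) * (A (Suc i) - discounted_sum g d m i)"
  using assms split[of "Suc i"] by (simp add: discounted_sum_Suc algebra_simps)

lemma discounted_sum_le_target:
  assumes "i \<in> {m..n}"
  shows "discounted_sum g d m i \<le> A i"
proof -
  have "m \<le> i" "i \<le> n" using assms by auto
  then show ?thesis
  proof (induction i rule: dec_induct)
    case base
    show ?case
      using target_minus_discounted_sum_start mult_nonneg_nonneg[OF g_nonneg[of m] A_nonneg] mn
      by simp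
  next
    case (step i)
    have "A i \<le> A (Suc i)" using A_mono step by (auto intro: mono_onD)
    then have "0 \<le> g (Suc i) * (A (Suc i) - discounted_sum g d m i)"
      using step g_nonneg[of "Suc i"] by simp
    then show ?case using target_minus_discounted_sum_Suc[of i] step by simp
  qed
qed

lemma sum_target_minus_discounted_sum_le:
  assumes g_le: "\<And>i. i \<in> {m..n} \<Longrightarrow> g i \<le> G" and "G < 1"
  shows "(\<Sum>i=m..n. A i - discounted_sum g d m i) \<le> A n / (1 - G)"
proof -
  define D where "D i = A i - discounted_sum g d m i" for i
  have D_nonneg: "0 \<le> D i" if "i \<in> {m..n}" for i
    using discounted_sum_le_target[OF that] by (simp add: D_def)
  have "G \<ge> 0" using g_nonneg[of m] g_le[of m] mn by simp
  have "(\<Sum>i=m..k. D i) \<le> G * (\<Sum>i=m..<k. D i) + G * A k" if "m \<le> k" "k \<le> n" for k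
    using that
  proof (induction k rule: dec_induct)
    case base
    show ?case using target_minus_discounted_sum_start g_le[of m] A_nonneg mn
      by (simp add: D_def mult_right_mono)
  next
    case (step k)
    have "A k \<le> A (Suc k)" using A_mono step by (auto intro: mono_onD)
    then have "D (Suc k) \<le> G * (D k + (A (Suc k) - A k))"
      using target_minus_discounted_sum_Suc[of k] step g_le[of "Suc k"] D_nonneg[of k]
      by (simp add: D_def mult_right_mono)
    moreover have "(\<Sum>i=m..Suc k. D i) = (\<Sum>i=m..k. D i) + D (Suc k)"
      using step by simp
    moreover have "(\<Sum>i=m..<Suc k. D i) = (\<Sum>i=m..<k. D i) + D k"
      using step by simp
    ultimately show ?case using step by (simp add: algebra_simps)
  qed
  from this[OF mn order_refl]
  have "(\<Sum>i=m..n. D i) \<le> G * (\<Sum>i=m..n. D i) + G * A n"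
  proof -
    have "(\<Sum>i=m..<n. D i) \<le> (\<Sum>i=m..n. D i)"
      using D_nonneg by (intro sum_mono2) auto
    then have "G * (\<Sum>i=m..<n. D i) \<le> G * (\<Sum>i=m..n. D i)"
      using \<open>G \<ge> 0\<close> by (rule mult_left_mono)
    then show ?thesis
      using \<open>(\<Sum>i=m..n. D i) \<le> G * (\<Sum>i=m..<n. D i) + G * A n\<close> by linarith
  qed
  moreover have "G * A n \<le> A n"
  proof (rule mult_left_le_one_le)
    show "0 \<le> A n" using A_nonneg A_mono mn by (meson atLeastAtMost_iff mono_onD order.trans order_refl)
  qed (use \<open>G \<ge> 0\<close> \<open>G < 1\<close> in auto)
  ultimately have "(1 - G) * (\<Sum>i=m..n. D i) \<le> A n"
    by (simp add: algebra_simps)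
  then show ?thesis using \<open>G < 1\<close> by (simp add: D_def pos_le_divide_eq mult.commute)
qed

end

definition target :: "real \<Rightarrow> real \<Rightarrow> real \<Rightarrow> real" where
  "target c a b = (1 - b) / (2 * c * b * (1 + a) * (a + b))"

lemma ratio_difference_eq_target:
  fixes a b c :: real
  assumes "0 < b" "b \<le> a" "c * (a\<^sup>2 - b\<^sup>2) = 1"
  shows "(1 - b) / (1 + b) - (1 - b) / (1 + a) = (1 - (1 - b) / (1 + b)) * target c a b"
proof -
  have "(a - b) * (c * (a + b)) = 1"
    using assms(3) by (simp add: power2_eq_square algebra_simps)
  then have "a - b = 1 / (c * (a + b))"
    by (metis eq_divide_eq mult_eq_0_iff zero_neq_one)
  moreover have "(1 - b) / (1 + b) - (1 - b) / (1 + a) = (1 - b) * (a - b) / ((1 + a) * (1 + b))"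
    using assms by (simp add: field_simps)
  ultimately have "(1 - b) / (1 + b) - (1 - b) / (1 + a) = (1 - b) / (c * (a + b) * (1 + a) * (1 + b))"
    by simp
  also have "\<dots> = 2 * b / (1 + b) * target c a b"
  proof -
    have nz: "c \<noteq> 0" "b \<noteq> 0" "a + b \<noteq> 0" "1 + a \<noteq> 0" "1 + b \<noteq> 0"
      using assms \<open>(a - b) * (c * (a + b)) = 1\<close> by auto
    have "2 * b / (1 + b) * target c a b = (2 * b * (1 - b)) / ((1 + b) * (2 * c * b * (1 + a) * (a + b)))"
      by (simp add: target_def)
    also have "\<dots> = (1 - b) / (c * (a + b) * (1 + a) * (1 + b))"
    proof -
      have "(1 + b) * (2 * c * b * (1 + a) * (a + b)) \<noteq> 0" "c * (a + b) * (1 + a) * (1 + b) \<noteq> 0"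
        using nz by simp_all
      then show ?thesis
        by (simp add: frac_eq_eq algebra_simps)
    qed
    finally show ?thesis ..
  qed
  also have "2 * b / (1 + b) = 1 - (1 - b) / (1 + b)"
    using assms by (simp add: field_simps)
  finally show ?thesis .
qed

lemma target_le:
  fixes a b c :: real
  assumes "0 < b" "b \<le> a" "0 < c"
  shows "target c a b \<le> 1 / (4 * c * b\<^sup>2)"
proof -
  have "(1 - b) * (2 * b) \<le> 2 * b"
    using assms by (simp add: mult_le_cancel_right1)
  also have "\<dots> \<le> 1 * (a + b)"
    using assms by simp
  also have "\<dots> \<le> (1 + a) * (a + b)"
    using assms by (intro mult_right_mono) auto
  finally have "(2 * c * b) * ((1 - b) * (2 * b)) \<le> (2 * c * b) * ((1 + a) * (a + b))"
    using assms by (intro mult_left_mono) auto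
  then have "(1 - b) * (4 * c * b\<^sup>2) \<le> 2 * c * b * (1 + a) * (a + b)"
    by (simp add: algebra_simps power2_eq_square)
  then show ?thesis
    using assms unfolding target_def by (simp add: divide_simps)
qed

lemma target_ge:
  fixes a b c :: real
  assumes "0 < b" "b \<le> a" "a \<le> 1" "c * (a\<^sup>2 - b\<^sup>2) = 1"
  shows "1 / (4 * c * a\<^sup>2) - (a - b) \<le> target c a b"
proof -
  have "0 \<le> a\<^sup>2 - b\<^sup>2"
    using assms by (simp add: power_mono)
  then have "0 < c"
    using assms(4) zero_less_mult_iff[of c "a\<^sup>2 - b\<^sup>2"] by auto
  have "(a - b) * (c * (a + b)) = 1"
    using assms(4) by (simp add: power2_eq_square algebra_simps)
  then have "a - b = 1 / (c * (a + b))"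
    by (metis eq_divide_eq mult_eq_0_iff zero_neq_one)
  also have "1 / (c * (a + b)) \<ge> 1 / (2 * c * a)"
    using assms \<open>0 < c\<close> by (intro divide_left_mono mult_pos_pos) auto
  finally have ab: "1 / (2 * c * a) \<le> a - b" .
  have "(1 - a) / (4 * c * a\<^sup>2 * (1 + a)) \<le> target c a b"
    unfolding target_def
  proof (rule frac_le)
    have "2 * b * (a + b) \<le> 2 * a * (2 * a)"
      using assms by (intro mult_mono) auto
    then have "(2 * c * (1 + a)) * (2 * b * (a + b)) \<le> (2 * c * (1 + a)) * (2 * a * (2 * a))"
      using assms \<open>0 < c\<close> by (intro mult_left_mono) auto
    then show "2 * c * b * (1 + a) * (a + b) \<le> 4 * c * a\<^sup>2 * (1 + a)"
      by (simp add: algebra_simps power2_eq_square)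
  qed (use assms \<open>0 < c\<close> in auto)
  moreover have "1 / (4 * c * a\<^sup>2) - 1 / (2 * c * a) \<le> (1 - a) / (4 * c * a\<^sup>2 * (1 + a))"
  proof -
    have "1 / (4 * c * a\<^sup>2) - 1 / (2 * c * a) = (1 - 2 * a) / (4 * c * a\<^sup>2)"
      using assms \<open>0 < c\<close> by (simp add: field_simps power2_eq_square)
    also have "\<dots> \<le> (1 - a) / (1 + a) / (4 * c * a\<^sup>2)"
    proof (rule divide_right_mono)
      have "(1 - 2 * a) * (1 + a) \<le> 1 - a"
        using assms by (simp add: algebra_simps)
      then show "1 - 2 * a \<le> (1 - a) / (1 + a)"
        using assms by (simp add: le_divide_eq)
    qed (use assms \<open>0 < c\<close> in auto)
    also have "\<dots> = (1 - a) / (4 * c * a\<^sup>2 * (1 + a))"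
      by simp
    finally show ?thesis .
  qed
  ultimately show ?thesis
    using ab by linarith
qed

lemma target_antimono:
  fixes a b a' b' c :: real
  assumes "0 < b" "b \<le> b'" "b' \<le> 1" "b \<le> a" "a \<le> a'" "0 < c"
  shows "target c a' b' \<le> target c a b"
  unfolding target_def
proof (rule frac_le)
  show "2 * c * b * (1 + a) * (a + b) \<le> 2 * c * b' * (1 + a') * (a' + b')"
    using assms by (intro mult_mono) auto
qed (use assms in auto)

text \<open>For c = N theta_N^2 this is rho c i = r_i - 1 = 1 - m_i; the scale c is left free below.\<close>

definition rho :: "real \<Rightarrow> nat \<Rightarrow> real" where
  "rho c i = sqrt (1 - (real i - 1) / c)"

definition gam_c :: "real \<Rightarrow> nat \<Rightarrow> real" where
  "gam_c c i = (1 - rho c i) / (1 + rho c i)"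

definition delta_c :: "real \<Rightarrow> nat \<Rightarrow> real" where
  "delta_c c i = gam_c c i - (1 - rho c i) / (1 + rho c (i - 1))"

definition target_at :: "real \<Rightarrow> nat \<Rightarrow> real" where
  "target_at c i = target c (rho c (i - 1)) (rho c i)"

context
  fixes c :: real and N :: nat
  assumes N: "3 \<le> N" and c: "real N - 1 < c"
begin

lemma scale_pos: "0 < c"
  using N c by linarith

lemma radicand_pos: "i \<le> N \<Longrightarrow> 0 < 1 - (real i - 1) / c"
  using c scale_pos by (simp add: divide_less_eq_1_pos)

lemma rho_sq: "i \<le> N \<Longrightarrow> (rho c i)\<^sup>2 = 1 - (real i - 1) / c"
  unfolding rho_def using radicand_pos by (simp add: less_imp_le)

lemma rho_pos: "i \<le> N \<Longrightarrow> 0 < rho c i"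
  unfolding rho_def using radicand_pos by simp

lemma rho_le_1: "1 \<le> i \<Longrightarrow> rho c i \<le> 1"
  unfolding rho_def using scale_pos by simp

lemma rho_antimono: "i \<le> j \<Longrightarrow> rho c j \<le> rho c i"
  unfolding rho_def using scale_pos by (simp add: divide_right_mono)

lemma rho_sq_diff:
  assumes "2 \<le> j" "j \<le> N"
  shows "c * ((rho c (j - 1))\<^sup>2 - (rho c j)\<^sup>2) = 1"
proof -
  have "real (j - 1) = real j - 1" "j - 1 \<le> N"
    using assms by auto
  then show ?thesis
    using assms scale_pos rho_sq[of j] rho_sq[of "j - 1"] by (simp add: field_simps)
qed

lemma delta_c_eq_target_at: "2 \<le> j \<Longrightarrow> j \<le> N \<Longrightarrow> delta_c c j = (1 - gam_c c j) * target_at c j"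
  unfolding delta_c_def gam_c_def target_at_def
  by (rule ratio_difference_eq_target) (use rho_sq_diff[of j] in \<open>auto simp: rho_pos rho_antimono\<close>)

lemma gam_c_nonneg: "1 \<le> i \<Longrightarrow> i \<le> N \<Longrightarrow> 0 \<le> gam_c c i"
  unfolding gam_c_def using rho_pos rho_le_1 by (simp add: less_imp_le)

lemma gam_c_le_gam_c_N: "1 \<le> i \<Longrightarrow> i \<le> N \<Longrightarrow> gam_c c i \<le> gam_c c N"
  unfolding gam_c_def
proof (rule frac_le)
  assume "1 \<le> i" "i \<le> N"
  then show "0 \<le> 1 - rho c N" "1 - rho c i \<le> 1 - rho c N" "0 < 1 + rho c N" "1 + rho c N \<le> 1 + rho c i"
    using rho_le_1[of N] rho_antimono[of i N] rho_pos[of N] N by auto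
qed

lemma rho_le_one_minus_gam_c: "rho c N \<le> 1 - gam_c c N"
proof -
  have "0 < rho c N" "rho c N \<le> 1"
    using N rho_pos rho_le_1 by auto
  then show ?thesis
    unfolding gam_c_def by (simp add: field_simps)
qed

lemma target_at_nonneg: "2 \<le> j \<Longrightarrow> j \<le> N \<Longrightarrow> 0 \<le> target_at c j"
  unfolding target_at_def target_def using rho_pos rho_le_1 rho_antimono scale_pos
  by (intro divide_nonneg_pos) (auto intro!: mult_pos_pos add_pos_pos)

lemma target_at_mono: "mono_on {3..N} (target_at c)"
proof (rule mono_onI)
  fix i j assume "i \<in> {3..N}" "j \<in> {3..N}" "i \<le> j"
  then show "target_at c i \<le> target_at c j"
    unfolding target_at_def
    by (intro target_antimono) (auto simp: rho_pos rho_le_1 rho_antimono scale_pos)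
qed

lemma target_at_le: "2 \<le> j \<Longrightarrow> j \<le> N \<Longrightarrow> target_at c j \<le> 1 / (4 * c * (rho c j)\<^sup>2)"
  unfolding target_at_def by (rule target_le) (auto simp: rho_pos rho_antimono scale_pos)

lemma target_at_ge:
  "2 \<le> j \<Longrightarrow> j \<le> N \<Longrightarrow> 1 / (4 * c * (rho c (j - 1))\<^sup>2) - (rho c (j - 1) - rho c j) \<le> target_at c j"
  unfolding target_at_def
  by (rule target_ge) (use rho_sq_diff[of j] in \<open>auto simp: rho_pos rho_antimono rho_le_1\<close>)

lemma ln_rho_sq_diff_bounds:
  assumes "2 \<le> j" "j \<le> N"
  shows "1 / (c * (rho c (j - 1))\<^sup>2) \<le> ln ((rho c (j - 1))\<^sup>2) - ln ((rho c j)\<^sup>2)"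
    and "ln ((rho c (j - 1))\<^sup>2) - ln ((rho c j)\<^sup>2) \<le> 1 / (c * (rho c j)\<^sup>2)"
proof -
  have pos: "0 < (rho c (j - 1))\<^sup>2" "0 < (rho c j)\<^sup>2"
    using assms rho_pos[of j] rho_pos[of "j - 1"] by (simp_all add: le_diff_conv)
  have diff: "(rho c (j - 1))\<^sup>2 - (rho c j)\<^sup>2 = 1 / c"
    using rho_sq_diff[OF assms] scale_pos by (simp add: eq_divide_eq mult.commute)
  show "1 / (c * (rho c (j - 1))\<^sup>2) \<le> ln ((rho c (j - 1))\<^sup>2) - ln ((rho c j)\<^sup>2)"
    using ln_diff_le[OF pos(2) pos(1)] diff by (simp add: field_simps)
  show "ln ((rho c (j - 1))\<^sup>2) - ln ((rho c j)\<^sup>2) \<le> 1 / (c * (rho c j)\<^sup>2)"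
    using ln_diff_le[OF pos] diff by (simp add: field_simps)
qed

lemma sum_target_at_le:
  "(\<Sum>j=3..N. target_at c j) \<le> - ln ((rho c N)\<^sup>2) / 4 + 1 / (4 * c * (rho c N)\<^sup>2)"
proof -
  define f where "f k = - ln ((rho c k)\<^sup>2) / 4 + 1 / (4 * c * (rho c k)\<^sup>2)" for k
  have "target_at c k \<le> f k - f (k - 1)" if "k \<in> {3..N}" for k
  proof -
    have "target_at c k \<le> 1 / (4 * c * (rho c k)\<^sup>2)"
      using that target_at_le by auto
    moreover have "1 / (4 * c * (rho c (k - 1))\<^sup>2) \<le> (ln ((rho c (k - 1))\<^sup>2) - ln ((rho c k)\<^sup>2)) / 4"
      using that ln_rho_sq_diff_bounds(1)[of k] by auto
    ultimately show ?thesis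
      unfolding f_def by (simp add: field_simps)
  qed
  then have "(\<Sum>j=3..N. target_at c j) \<le> (\<Sum>k=3..N. f k - f (k - 1))"
    by (rule sum_mono)
  also have "\<dots> = f N - f 2"
    using sum_telescope''[of 2 N f] N by simp
  finally have "(\<Sum>j=3..N. target_at c j) \<le> f N - f 2" .
  moreover have "0 \<le> f 2"
  proof -
    have "0 < (rho c 2)\<^sup>2" "(rho c 2)\<^sup>2 \<le> 1"
      using rho_pos[of 2] rho_le_1[of 2] N by (auto simp: power_le_one)
    then have "ln ((rho c 2)\<^sup>2) \<le> 0" "0 \<le> 1 / (4 * c * (rho c 2)\<^sup>2)"
      using scale_pos ln_le_minus_one[of "(rho c 2)\<^sup>2"] by auto
    then show ?thesis
      unfolding f_def by linarith
  qed
  ultimately show ?thesis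
    unfolding f_def by simp
qed

lemma sum_target_at_ge:
  "- ln ((rho c (N - 1))\<^sup>2) / 4 - 1 \<le> (\<Sum>j=3..N. target_at c j)"
proof -
  define f where "f k = - ln ((rho c (k - 1))\<^sup>2) / 4 + rho c k" for k
  have "f k - f (k - 1) \<le> target_at c k" if "k \<in> {3..N}" for k
  proof -
    have "(ln ((rho c (k - 1 - 1))\<^sup>2) - ln ((rho c (k - 1))\<^sup>2)) / 4 \<le> 1 / (4 * c * (rho c (k - 1))\<^sup>2)"
      using that ln_rho_sq_diff_bounds(2)[of "k - 1"] by auto
    then show ?thesis
      using that target_at_ge[of k] unfolding f_def by (auto simp: field_simps)
  qed
  then have "(\<Sum>k=3..N. f k - f (k - 1)) \<le> (\<Sum>j=3..N. target_at c j)"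
    by (rule sum_mono)
  moreover have "(\<Sum>k=3..N. f k - f (k - 1)) = f N - f 2"
    using sum_telescope''[of 2 N f] N by simp
  moreover have "rho c 1 = 1" "rho c 2 \<le> 1" "0 < rho c N"
    using rho_le_1[of 2] rho_pos[of N] by (auto simp: rho_def)
  ultimately show ?thesis
    unfolding f_def by simp
qed

lemma sum_discounted_sum_bounds:
  defines "S \<equiv> \<Sum>i=3..N. discounted_sum (gam_c c) (delta_c c) 3 i"
  shows "- ln ((rho c (N - 1))\<^sup>2) / 4 - 1 - 1 / (4 * c * (rho c N)^3) \<le> S"
    and "S \<le> - ln ((rho c N)\<^sup>2) / 4 + 1 / (4 * c * (rho c N)\<^sup>2)"
proof -
  define lag where "lag = (\<Sum>i=3..N. target_at c i - discounted_sum (gam_c c) (delta_c c) 3 i)"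
  have S_eq: "S = (\<Sum>i=3..N. target_at c i) - lag"
    unfolding S_def lag_def by (simp add: sum_subtractf)
  have split: "\<And>i. i \<in> {3..N} \<Longrightarrow> delta_c c i = (1 - gam_c c i) * target_at c i"
    using delta_c_eq_target_at by auto
  have gam_c_nonneg_on: "\<And>i. i \<in> {3..N} \<Longrightarrow> 0 \<le> gam_c c i"
    using gam_c_nonneg by auto
  have gam_c_le: "\<And>i. i \<in> {3..N} \<Longrightarrow> gam_c c i \<le> gam_c c N"
    using gam_c_le_gam_c_N by auto
  have "0 \<le> target_at c 3"
    using target_at_nonneg N by simp
  note tracking = N split gam_c_nonneg_on this target_at_mono
  have "0 \<le> lag"
    unfolding lag_def using discounted_sum_le_target[OF tracking] by (intro sum_nonneg) auto
  then show "S \<le> - ln ((rho c N)\<^sup>2) / 4 + 1 / (4 * c * (rho c N)\<^sup>2)"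
    using S_eq sum_target_at_le by linarith
  have "0 < rho c N"
    using rho_pos by simp
  have "lag \<le> target_at c N / (1 - gam_c c N)"
    unfolding lag_def
    using sum_target_minus_discounted_sum_le[OF tracking gam_c_le]
      rho_le_one_minus_gam_c \<open>0 < rho c N\<close> by simp
  also have "\<dots> \<le> target_at c N / rho c N"
    using rho_le_one_minus_gam_c \<open>0 < rho c N\<close> target_at_nonneg[of N] N
    by (intro divide_left_mono) auto
  also have "\<dots> \<le> 1 / (4 * c * (rho c N)\<^sup>2) / rho c N"
    using target_at_le[of N] \<open>0 < rho c N\<close> N by (intro divide_right_mono) auto
  also have "\<dots> = 1 / (4 * c * (rho c N)^3)"
    by (simp add: power2_eq_square power3_eq_cube)
  finally show "- ln ((rho c (N - 1))\<^sup>2) / 4 - 1 - 1 / (4 * c * (rho c N)^3) \<le> S"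
    using S_eq sum_target_at_ge by linarith
qed

end

context
  fixes N :: nat and t c :: real
  assumes N: "3 \<le> N" and t: "0 < t" "t \<le> 1" and large: "1 \<le> (real N)\<^sup>2 * t ^ 3"
    and c_def: "c = real N * (1 + t)\<^sup>2"
begin

lemma scale_bounds: "real N \<le> c" "c \<le> 4 * real N"
proof -
  have "1 \<le> (1 + t)\<^sup>2" "(1 + t)\<^sup>2 \<le> 4"
    using t power_mono[of "1 + t" 2 2] by (auto simp: one_le_power)
  then show "real N \<le> c" "c \<le> 4 * real N"
    unfolding c_def using N by auto
qed

lemma scale_gt_N_minus_1: "real N - 1 < c"
  using scale_bounds by linarith

lemma N_times_t_ge_1: "1 \<le> real N * t"
proof (rule power2_le_imp_le)
  have "(real N)\<^sup>2 * t ^ 3 \<le> (real N)\<^sup>2 * t\<^sup>2"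
    using t by (intro mult_left_mono) (auto simp: power_decreasing)
  then show "1\<^sup>2 \<le> (real N * t)\<^sup>2"
    using large by (simp add: power_mult_distrib)
qed (use t in simp)

lemma scaled_rho_sq_last: "c * (rho c N)\<^sup>2 = real N * t * (2 + t) + 1"
proof -
  have "c * (rho c N)\<^sup>2 = c - real N + 1"
    using rho_sq[OF N scale_gt_N_minus_1, of N] scale_bounds N by (simp add: field_simps)
  then show ?thesis
    unfolding c_def by (simp add: power2_eq_square algebra_simps)
qed

lemma rho_sq_last_ge: "t / 2 \<le> (rho c N)\<^sup>2"
proof -
  have "t / 2 * c \<le> t / 2 * (4 * real N)"
    using scale_bounds t by (intro mult_left_mono) auto
  also have "\<dots> \<le> c * (rho c N)\<^sup>2"
    unfolding scaled_rho_sq_last using t by (simp add: algebra_simps)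
  finally show ?thesis
    using scale_bounds N by (simp add: mult.commute)
qed

lemma rho_sq_before_last_le: "(rho c (N - 1))\<^sup>2 \<le> 5 * t"
proof -
  have "c * (rho c (N - 1))\<^sup>2 = real N * t * (2 + t) + 2"
    using rho_sq_diff[OF N scale_gt_N_minus_1, of N] N scaled_rho_sq_last by (simp add: algebra_simps)
  also have "\<dots> \<le> 5 * (real N * t)"
  proof -
    have "real N * t * t \<le> real N * t"
      using t N by (intro mult_left_le) auto
    then show ?thesis
      using N_times_t_ge_1 by (simp add: algebra_simps)
  qed
  also have "\<dots> \<le> c * (5 * t)"
    using scale_bounds t by (simp add: mult_right_mono)
  finally show ?thesis
    using scale_bounds N by simp
qed

lemma scaled_rho_cube_last_ge: "1 \<le> c * (rho c N) ^ 3"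
proof (rule power2_le_imp_le)
  define X where "X = c * (rho c N)\<^sup>2"
  have "(c * (rho c N) ^ 3)\<^sup>2 * c = X ^ 3"
    unfolding X_def by (simp add: power_mult_distrib eval_nat_numeral)
  moreover have "c \<le> X ^ 3"
  proof -
    have "8 * real N * 1 \<le> 8 * real N * ((real N)\<^sup>2 * t ^ 3)"
      using large by (intro mult_left_mono) auto
    then have "c \<le> 8 * real N * ((real N)\<^sup>2 * t ^ 3)"
      using scale_bounds by simp
    also have "\<dots> = (2 * real N * t) ^ 3"
      by (simp add: power2_eq_square power3_eq_cube)
    also have "\<dots> \<le> X ^ 3"
      unfolding X_def scaled_rho_sq_last using t by (intro power_mono) (auto simp: algebra_simps)
    finally show ?thesis .
  qed
  ultimately have "1 * c \<le> (c * (rho c N) ^ 3)\<^sup>2 * c"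
    by simp
  moreover have "0 < c"
    using scale_bounds N by linarith
  ultimately show "1\<^sup>2 \<le> (c * (rho c N) ^ 3)\<^sup>2"
    using mult_right_le_imp_le by simp
qed (use scale_bounds N rho_pos[OF N scale_gt_N_minus_1, of N] in simp)

lemma sum_discounted_sum_asymptotics:
  "\<bar>(\<Sum>i=3..N. discounted_sum (gam_c c) (delta_c c) 3 i) + ln t / 4\<bar> \<le> 3"
proof -
  have "ln (t / 2) \<le> ln ((rho c N)\<^sup>2)"
    using rho_sq_last_ge t by (intro ln_mono) auto
  then have upper_log: "ln t - ln 2 \<le> ln ((rho c N)\<^sup>2)"
    using t by (simp add: ln_div)
  have "ln ((rho c (N - 1))\<^sup>2) \<le> ln (5 * t)"
    using rho_sq_before_last_le rho_pos[OF N scale_gt_N_minus_1, of "N - 1"] by (intro ln_mono) auto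
  then have lower_log: "ln ((rho c (N - 1))\<^sup>2) \<le> ln 5 + ln t"
    using t by (simp add: ln_mult)
  have "1 \<le> c * (rho c N)\<^sup>2"
    unfolding scaled_rho_sq_last using t by simp
  then have "1 / (4 * c * (rho c N)\<^sup>2) \<le> 1 / 4" "1 / (4 * c * (rho c N) ^ 3) \<le> 1 / 4"
    using scaled_rho_cube_last_ge by (simp_all add: mult.assoc)
  moreover have "ln (2::real) \<le> 1" "ln (5::real) \<le> 4"
    using ln_le_minus_one[of 2] ln_le_minus_one[of 5] by simp_all
  ultimately show ?thesis
    using sum_discounted_sum_bounds[OF N scale_gt_N_minus_1] upper_log lower_log by (simp add: abs_le_iff)
qed

end

lemma Tdelta_eq_discounted_sum:
  fixes w :: "nat \<Rightarrow> real" and N i :: nat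
  defines "c \<equiv> real N * (theta w N)\<^sup>2"
  shows "Tdelta w N i = discounted_sum (gam_c c) (delta_c c) 3 i"
  unfolding c_def Tdelta_def discounted_sum_def gam_def delta_def gam_c_def delta_c_def mm_def rr_def rho_def
  by simp

lemma sum_Tdelta_estimate:
  fixes w :: "nat \<Rightarrow> real" and N :: nat
  assumes N: "3 \<le> N" and w_range: "1 \<le> w N" "w N \<le> real N powr (2/3)"
  shows "\<bar>(\<Sum>i=3..N. Tdelta w N i) - ln (real N) / 6 + ln (w N) / 4\<bar> \<le> 3"
proof -
  define t where "t = real N powr (-2/3) * w N"
  have N_pos: "0 < real N"
    using N by simp
  have t_pos: "0 < t"
    unfolding t_def using N_pos w_range by simp
  have "t \<le> real N powr (-2/3) * real N powr (2/3)"
    unfolding t_def using w_range by (intro mult_left_mono) auto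
  then have t_le: "t \<le> 1"
    using N_pos by (simp flip: powr_add)
  have "(real N)\<^sup>2 * t ^ 3 = (w N) ^ 3"
  proof -
    have "(real N powr (-2/3)) ^ 3 = real N powr (-2)"
      using N_pos by (simp add: powr_power)
    also have "\<dots> = 1 / (real N)\<^sup>2"
      using N_pos by (simp add: powr_minus_divide powr_numeral)
    finally have "(real N)\<^sup>2 * (real N powr (-2/3)) ^ 3 = 1"
      using N_pos by simp
    then show ?thesis
      unfolding t_def by (simp add: power_mult_distrib mult.assoc[symmetric])
  qed
  then have large: "1 \<le> (real N)\<^sup>2 * t ^ 3"
    using w_range by simp
  have ln_t: "ln t = ln (w N) - 2/3 * ln (real N)"
    unfolding t_def using N_pos w_range by (simp add: ln_mult)
  have "theta w N = 1 + t"
    unfolding theta_def t_def ..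
  then have "(\<Sum>i=3..N. Tdelta w N i)
      = (\<Sum>i=3..N. discounted_sum (gam_c (real N * (1 + t)\<^sup>2)) (delta_c (real N * (1 + t)\<^sup>2)) 3 i)"
    by (simp add: Tdelta_eq_discounted_sum)
  then have "(\<Sum>i=3..N. Tdelta w N i) - ln (real N) / 6 + ln (w N) / 4
      = (\<Sum>i=3..N. discounted_sum (gam_c (real N * (1 + t)\<^sup>2)) (delta_c (real N * (1 + t)\<^sup>2)) 3 i) + ln t / 4"
    using ln_t by linarith
  then show ?thesis
    using sum_discounted_sum_asymptotics[OF N t_pos t_le large refl] by simp
qed

lemma sum_Tdelta_log_estimate:
  fixes w :: "nat \<Rightarrow> real" and N :: nat
  assumes N: "3 \<le> N" and lnln: "1 \<le> ln (ln (real N))"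
    and w_range: "(ln (ln (real N)))\<^sup>2 \<le> w N" "w N \<le> (ln (real N))\<^sup>2"
    and small: "(ln (real N))\<^sup>2 \<le> real N powr (2/3)"
  shows "\<bar>(\<Sum>i=3..N. Tdelta w N i) - ln (real N) / 6\<bar> \<le> 4 * ln (ln (real N))"
proof -
  have "0 < ln (real N)"
    using N by simp
  have "1 \<le> (ln (ln (real N)))\<^sup>2"
    using lnln by (simp add: one_le_power)
  then have w_bounds: "1 \<le> w N" "w N \<le> real N powr (2/3)"
    using w_range small by linarith+
  have "ln (w N) \<le> ln ((ln (real N))\<^sup>2)"
    using w_range(2) w_bounds by (intro ln_mono) auto
  then have "0 \<le> ln (w N)" "ln (w N) \<le> 2 * ln (ln (real N))"
    using w_bounds \<open>0 < ln (real N)\<close> by (simp_all add: ln_realpow)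
  then show ?thesis
    using sum_Tdelta_estimate[where w = w, OF N w_bounds] lnln by (simp add: abs_le_iff)
qed

theorem lemma11:
  fixes w :: "nat \<Rightarrow> real"
  assumes "\<And>N. w N > 0"
    and "((\<lambda>N. (ln (ln (real N)))^2 / w N) \<longlongrightarrow> 0) at_top"
    and "((\<lambda>N. w N / (ln (real N))^2) \<longlongrightarrow> 0) at_top"
  shows "(\<lambda>N. (\<Sum>i=3..N. Tdelta w N i) - ln (real N) / 6) \<in> O(\<lambda>N. ln (ln (real N)))"
proof (rule bigoI)
  have "eventually (\<lambda>N. (ln (ln (real N)))\<^sup>2 / w N < 1) at_top"
    using order_tendstoD(2)[OF assms(2)] by simp
  moreover have "eventually (\<lambda>N. w N / (ln (real N))\<^sup>2 < 1) at_top"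
    using order_tendstoD(2)[OF assms(3)] by simp
  moreover have "eventually (\<lambda>N::nat. 1 \<le> ln (ln (real N))) at_top"
    by real_asymp
  moreover have "eventually (\<lambda>N::nat. (ln (real N))\<^sup>2 \<le> real N powr (2/3)) at_top"
    by real_asymp
  moreover have "eventually (\<lambda>N::nat. 3 \<le> N) at_top"
    by (rule eventually_ge_at_top)
  ultimately show "eventually (\<lambda>N. norm ((\<Sum>i=3..N. Tdelta w N i) - ln (real N) / 6)
      \<le> 4 * norm (ln (ln (real N)))) at_top"
  proof eventually_elim
    case (elim N)
    then have "0 < (ln (real N))\<^sup>2"
      by simp
    then have "(ln (ln (real N)))\<^sup>2 \<le> w N" "w N \<le> (ln (real N))\<^sup>2"
      using elim(1,2) assms(1)[of N] by (simp_all add: divide_less_eq)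
    then show ?case
      using sum_Tdelta_log_estimate[where w = w, OF elim(5,3) _ _ elim(4)] elim(3) by simp
  qed
qed

end
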